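(* Let $U\subset\mathbb{R}^s$ be open, $X:U\to\mathbb{R}^{n+1}_1$ a spacelike embedding, $M=X(U)$, $n^T$ a smooth future directed unit timelike normal field, $u_0\in U$, $p_0=X(u_0)$, $\xi_0\in N_1(M)_{p_0}[n^T]$, and $n^S$ a local smooth section of $N_1(M)[n^T]$ with $n^S(u_0)=\xi_0$. The following are equivalent: (1) $K_\ell(n^T,n^S)(u_0)=0$ (i.e. $p_0$ is a $(n^T(u_0),\xi_0)$-parabolic point); (2) $\widetilde K_\ell(n^T)(p_0,\xi_0)=0$.
   Context: $\mathbb{R}^{n+1}_1$ is $\mathbb{R}^{n+1}$ with $\langle x,y\rangle=-x_0y_0+\sum_{i=1}^n x_iy_i$; spacelike embedding means tangent spaces consist of vectors with $\langle v,v\rangle>0$. $N_p(M)$ is the pseudo-orthogonal complement of $T_pM$; $n^T(u)\in N_{X(u)}(M)$, $\langle n^T,n^T\rangle=-1$, $n^T_0>0$. $N_1(M)_p[n^T]=\{\xi\in N_p(M):\langle\xi,\xi\rangle=1,\ \langle\xi,n^T(p)\rangle=0\}$, $N_1(M)[n^T]$ the union over $p$. For nonzero lightlike $x$, $\widetilde x=x/x_0$. $\pi^\tau:T_pM\oplus N_p(M)\to T_pM$ the projection; $K_\ell(n^T,n^S)=\det\big(-\pi^\tau\circ d(n^T+n^S)\big)$. $\widetilde{\mathbb{LG}}(n^T)(p,\xi)=\widetilde{n^T(p)+\xi}\in\mathbb{S}^{n-1}_+=\{x:\langle x,x\rangle=0,x_0=1\}$. Identify $T_{(p,\xi)}N_1(M)[n^T]=T_pM\oplus\{\eta\in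 N_p(M):\langle\eta,\xi\rangle=\langle\eta,n^T(p)\rangle=0\}$, so $\mathbb{R}^{n+1}_1=T_{(p,\xi)}N_1(M)[n^T]\oplus\mathrm{span}\{n^T(p),\xi\}$, and let $\Pi^\tau$ be the projection to the first summand. $\widetilde K_\ell(n^T)(p,\xi)=\det\big(-\Pi^\tau\circ d_{(p,\xi)}\widetilde{\mathbb{LG}}(n^T)\big)$. *)

theory Defs
  imports "HOL-Analysis.Analysis"
begin

fun iter_dd :: "'a::real_normed_vector list \<Rightarrow> ('a \<Rightarrow> 'b::real_normed_vector) \<Rightarrow> 'a \<Rightarrow> 'b" where
  "iter_dd [] f = f"
| "iter_dd (v # vs) f = (\<lambda>x. frechet_derivative (iter_dd vs f) (at x) v)"

definition smooth_on :: "'a::real_normed_vector set \<Rightarrow> ('a \<Rightarrow> 'b::real_normed_vector) \<Rightarrow> bool" where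
  "smooth_on S f \<longleftrightarrow> (\<forall>vs. iter_dd vs f differentiable_on S)"

text \<open>R^{n+1} is modelled as real^('n option); the coordinate x_0 is x $ None,
  and x_1..x_n are x $ Some i. So n = CARD('n).\<close>
type_synonym 'n mink = "real ^ ('n option)"

definition lor :: "'n::finite mink \<Rightarrow> 'n mink \<Rightarrow> real" where
  "lor x y = - (x $ None) * (y $ None) + (\<Sum>i\<in>UNIV. (x $ Some i) * (y $ Some i))"

text \<open>For a nonzero lightlike x: x~ = x / x_0.\<close>
definition tld :: "'n::finite mink \<Rightarrow> 'n mink" where
  "tld x = (1 / (x $ None)) *\<^sub>R x"

text \<open>Projection onto V along W (for a direct sum decomposition V + W of the space).\<close>
definition proj_along :: "'a::real_vector set \<Rightarrow> 'a set \<Rightarrow> 'a \<Rightarrow> 'a" where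
  "proj_along V W x = (THE v. v \<in> V \<and> x - v \<in> W)"

text \<open>Determinant of an endomorphism f of a linear subspace V of real^'m:
  extend f by the identity on the Euclidean orthogonal complement of V.\<close>
definition det_on :: "(real ^ 'm::finite) set \<Rightarrow> (real ^ 'm \<Rightarrow> real ^ 'm) \<Rightarrow> real" where
  "det_on V f =
     (let P = proj_along V {y. \<forall>v\<in>V. y \<bullet> v = 0}
      in det (matrix (\<lambda>x. f (P x) + (x - P x))))"

definition tang :: "(real ^ 's::finite \<Rightarrow> 'n::finite mink) \<Rightarrow> real ^ 's \<Rightarrow> 'n mink set" where
  "tang X u = range (frechet_derivative X (at u))"

definition normsp :: "(real ^ 's::finite \<Rightarrow> 'n::finite mink) \<Rightarrow> real ^ 's \<Rightarrow> 'n mink set" where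
  "normsp X u = {y. \<forall>v\<in>tang X u. lor y v = 0}"

definition spacelike_embedding :: "(real ^ 's::finite) set \<Rightarrow> (real ^ 's \<Rightarrow> 'n::finite mink) \<Rightarrow> bool" where
  "spacelike_embedding U X \<longleftrightarrow>
     open U \<and> smooth_on U X \<and> inj_on X U \<and> continuous_on (X ` U) (inv_into U X) \<and>
     (\<forall>u\<in>U. inj (frechet_derivative X (at u))) \<and>
     (\<forall>u\<in>U. \<forall>v\<in>tang X u. v \<noteq> 0 \<longrightarrow> lor v v > 0)"

definition future_unit_timelike_normal ::
    "(real ^ 's::finite) set \<Rightarrow> (real ^ 's \<Rightarrow> 'n::finite mink) \<Rightarrow> (real ^ 's \<Rightarrow> 'n mink) \<Rightarrow> bool" where
  "future_unit_timelike_normal U X nT \<longleftrightarrow>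
     smooth_on U nT \<and>
     (\<forall>u\<in>U. nT u \<in> normsp X u \<and> lor (nT u) (nT u) = -1 \<and> nT u $ None > 0)"

definition N1fib :: "(real ^ 's::finite \<Rightarrow> 'n::finite mink) \<Rightarrow> (real ^ 's \<Rightarrow> 'n mink) \<Rightarrow> real ^ 's \<Rightarrow> 'n mink set" where
  "N1fib X nT u = {\<xi>. \<xi> \<in> normsp X u \<and> lor \<xi> \<xi> = 1 \<and> lor \<xi> (nT u) = 0}"

text \<open>N_1(M)[n^T], parametrised via the embedding X by pairs (u, xi) with p = X u.\<close>
definition N1 :: "(real ^ 's::finite) set \<Rightarrow> (real ^ 's \<Rightarrow> 'n::finite mink) \<Rightarrow> (real ^ 's \<Rightarrow> 'n mink)
    \<Rightarrow> ((real ^ 's) \<times> 'n mink) set" where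
  "N1 U X nT = {(u, \<xi>). u \<in> U \<and> \<xi> \<in> N1fib X nT u}"

definition local_section ::
    "(real ^ 's::finite) set \<Rightarrow> (real ^ 's \<Rightarrow> 'n::finite mink) \<Rightarrow> (real ^ 's \<Rightarrow> 'n mink)
       \<Rightarrow> (real ^ 's) set \<Rightarrow> (real ^ 's \<Rightarrow> 'n mink) \<Rightarrow> bool" where
  "local_section U X nT W nS \<longleftrightarrow>
     open W \<and> W \<subseteq> U \<and> smooth_on W nS \<and> (\<forall>u\<in>W. nS u \<in> N1fib X nT u)"

text \<open>K_l(n^T,n^S)(u) = det(- pi^tau o d(n^T + n^S)) as an endomorphism of T_pM.\<close>
definition K_l :: "(real ^ 's::finite \<Rightarrow> 'n::finite mink) \<Rightarrow> (real ^ 's \<Rightarrow> 'n mink) \<Rightarrow> (real ^ 's \<Rightarrow> 'n mink)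
    \<Rightarrow> real ^ 's \<Rightarrow> real" where
  "K_l X nT nS u =
     (let T = tang X u;
          piT = proj_along T (normsp X u);
          D = frechet_derivative (\<lambda>v. nT v + nS v) (at u);
          dXinv = inv (frechet_derivative X (at u))
      in det_on T (\<lambda>a. - piT (D (dXinv a))))"

text \<open>The (normalised) lightcone Gauss map LG~(n^T)(p, xi) = (n^T(p) + xi)~, written in the
  parameter u (p = X u). The formula defines a smooth map on an open neighbourhood of N_1 in
  real^'s x R^{n+1}, whose derivative restricted to the tangent space of N_1 is the differential.\<close>
definition LGt :: "(real ^ 's::finite \<Rightarrow> 'n::finite mink) \<Rightarrow> (real ^ 's) \<times> 'n mink \<Rightarrow> 'n mink" where
  "LGt nT = (\<lambda>(u, \<xi>). tld (nT u + \<xi>))"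

definition tangent_space :: "'a::real_normed_vector set \<Rightarrow> 'a \<Rightarrow> 'a set" where
  "tangent_space S x = {v. \<exists>\<gamma> e. e > 0 \<and> \<gamma> 0 = x \<and> (\<forall>t\<in>{-e<..<e}. \<gamma> t \<in> S) \<and>
                            (\<gamma> has_vector_derivative v) (at 0)}"

text \<open>K~_l(n^T)(p, xi) with p = X u: determinant of - Pi^tau o dLG~ on
  T_(p,xi) N_1 = T_pM (+) E, E = {eta in N_p. <eta,xi> = <eta,n^T(p)> = 0}. A tangent vector
  (w, b) of N_1 (w the u-component, b the xi-component) is identified with dX_u(w) + (E-part of b).\<close>
definition Kt_l :: "(real ^ 's::finite) set \<Rightarrow> (real ^ 's \<Rightarrow> 'n::finite mink) \<Rightarrow> (real ^ 's \<Rightarrow> 'n mink)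
    \<Rightarrow> real ^ 's \<Rightarrow> 'n mink \<Rightarrow> real" where
  "Kt_l U X nT u \<xi> =
     (let T = tang X u;
          E = {\<eta>. \<eta> \<in> normsp X u \<and> lor \<eta> \<xi> = 0 \<and> lor \<eta> (nT u) = 0};
          projE = proj_along E {y. \<forall>e\<in>E. lor y e = 0};
          V = {a + \<eta> | a \<eta>. a \<in> T \<and> \<eta> \<in> E};
          PiT = proj_along V (span {nT u, \<xi>});
          TN = tangent_space (N1 U X nT) (u, \<xi>);
          iota = (\<lambda>(w, b). frechet_derivative X (at u) w + projE b);
          dLG = frechet_derivative (LGt nT) (at (u, \<xi>))
      in det_on V (\<lambda>x. - PiT (dLG (inv_into TN iota x))))"

end

theory Submission
  imports Defs
begin

text \<open>Both determinants vanish exactly when the corresponding endomorphism has a nontrivial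
  kernel, so it suffices to compare kernels. Let \<open>T\<close> be the tangent space at \<open>p0\<close>, \<open>E\<close> the normal
  directions pseudo-orthogonal to \<open>n\<^sup>T(p0)\<close> and \<open>\<xi>0\<close>, and \<open>l = n\<^sup>T(p0) + \<xi>0\<close>, a lightlike vector with
  \<open>l\<^sub>0 \<noteq> 0\<close>. The differential of \<open>LG~\<close> at \<open>(p0, \<xi>0)\<close> is \<open>(dn\<^sup>T + d\<xi>) / l\<^sub>0\<close> up to a multiple of
  \<open>l \<in> span {n\<^sup>T, \<xi>0}\<close>, which \<open>\<Pi>\<^sup>\<tau>\<close> annihilates. Differentiating the normality condition shows
  that the \<open>\<xi>\<close>-component of a tangent vector \<open>(w, b)\<close> of \<open>N\<^sub>1(M)[n\<^sup>T]\<close> has the same tangential part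
  as \<open>dn\<^sup>S(w)\<close>, while its \<open>E\<close>-part can be prescribed freely. Hence \<open>-\<Pi>\<^sup>\<tau> \<circ> dLG~\<close> is block
  triangular on \<open>T \<oplus> E\<close>, with diagonal blocks \<open>-\<pi>\<^sup>\<tau> \<circ> d(n\<^sup>T + n\<^sup>S) / l\<^sub>0\<close> and \<open>-id / l\<^sub>0\<close>, and
  its kernel is nontrivial iff that of \<open>-\<pi>\<^sup>\<tau> \<circ> d(n\<^sup>T + n\<^sup>S)\<close> is.\<close>

section \<open>The Lorentz form\<close>

definition time_flip :: "'n::finite mink \<Rightarrow> 'n mink" where
  "time_flip x = (\<chi> i. if i = None then - (x $ i) else x $ i)"

lemma lor_eq_inner_time_flip: "lor x y = x \<bullet> time_flip y"
proof -
  have U: "(UNIV :: 'n option set) = insert None (range Some)"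
    by (metis UNIV_option_conv)
  show ?thesis
    unfolding lor_def inner_vec_def time_flip_def U by (simp add: sum.reindex)
qed

lemma linear_time_flip: "linear time_flip"
  by (rule linearI) (auto simp: time_flip_def vec_eq_iff)

lemma lor_commute: "lor x y = lor y x"
  unfolding lor_def by (simp add: mult.commute)

lemma bounded_bilinear_lor: "bounded_bilinear lor"
proof -
  have "bounded_linear time_flip"
    using linear_time_flip linear_conv_bounded_linear by blast
  then have "bounded_bilinear (\<lambda>x y. x \<bullet> time_flip y)"
    by (rule bounded_bilinear.comp[OF bounded_bilinear_inner bounded_linear_ident])
  then show ?thesis
    by (simp add: lor_eq_inner_time_flip[abs_def])
qed

lemma lor_add_left: "lor (x + y) z = lor x z + lor y z"
  by (simp add: lor_eq_inner_time_flip inner_add_left)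
lemma lor_add_right: "lor z (x + y) = lor z x + lor z y"
  by (metis lor_add_left lor_commute)
lemma lor_diff_left: "lor (x - y) z = lor x z - lor y z"
  by (simp add: lor_eq_inner_time_flip inner_diff_left)
lemma lor_diff_right: "lor z (x - y) = lor z x - lor z y"
  by (metis lor_diff_left lor_commute)
lemma lor_scale_left: "lor (c *\<^sub>R x) z = c * lor x z"
  by (simp add: lor_eq_inner_time_flip)
lemma lor_scale_right: "lor z (c *\<^sub>R x) = c * lor z x"
  by (metis lor_scale_left lor_commute)
lemma lor_minus_left: "lor (- x) z = - lor x z"
  by (simp add: lor_eq_inner_time_flip)
lemma lor_minus_right: "lor z (- x) = - lor z x"
  by (metis lor_minus_left lor_commute)
lemma lor_zero_left [simp]: "lor 0 z = 0"
  by (simp add: lor_eq_inner_time_flip)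
lemma lor_zero_right [simp]: "lor z 0 = 0"
  by (metis lor_zero_left lor_commute)
lemma lor_sum_left: "lor (\<Sum>i\<in>A. f i) z = (\<Sum>i\<in>A. lor (f i) z)"
  by (simp add: lor_eq_inner_time_flip inner_sum_left)
lemma lor_sum_right: "lor z (\<Sum>i\<in>A. f i) = (\<Sum>i\<in>A. lor z (f i))"
  by (simp add: lor_eq_inner_time_flip linear_sum[OF linear_time_flip] inner_sum_right)

lemmas lor_simps = lor_add_left lor_add_right lor_diff_left lor_diff_right lor_scale_left
  lor_scale_right lor_minus_left lor_minus_right lor_sum_left lor_sum_right

lemma continuous_lor [continuous_intros]:
  "continuous F f \<Longrightarrow> continuous F g \<Longrightarrow> continuous F (\<lambda>x. lor (f x) (g x))"
  using bounded_bilinear.continuous[OF bounded_bilinear_lor] by blast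

lemma subspace_lor_orthogonal: "subspace {z. \<forall>e\<in>A. lor z e = 0}"
  unfolding subspace_def by (auto simp: lor_simps)

definition unit_normalize :: "'n::finite mink \<Rightarrow> 'n mink" where
  "unit_normalize \<zeta> = inverse (sqrt (lor \<zeta> \<zeta>)) *\<^sub>R \<zeta>"

text \<open>Cauchy--Schwarz on the spatial parts.\<close>
lemma eq_0_if_lor_orthogonal_unit_timelike:
  fixes n v :: "'n::finite mink"
  assumes nn: "lor n n = -1" and vn: "lor v n = 0" and vv: "lor v v \<le> 0"
  shows "v = 0"
proof -
  define a where "a = n $ None"
  define c where "c = v $ None"
  define b :: "real^'n" where "b = (\<chi> i. n $ Some i)"
  define w :: "real^'n" where "w = (\<chi> i. v $ Some i)"
  have split: "lor x y = - (x $ None) * (y $ None) + (\<chi> i. x $ Some i) \<bullet> (\<chi> i. y $ Some i)"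
    for x y :: "'n mink"
    unfolding lor_def inner_vec_def by simp
  have bb: "b \<bullet> b = a * a - 1" using nn split[of n n] unfolding a_def b_def by simp
  have wb: "w \<bullet> b = c * a" using vn split[of v n] unfolding a_def c_def b_def w_def by simp
  have ww: "w \<bullet> w \<le> c * c" using vv split[of v v] unfolding c_def w_def by simp
  have "c * c * (a * a) \<le> w \<bullet> w * (a * a) - w \<bullet> w"
    using Cauchy_Schwarz_ineq[of w b] unfolding bb wb by (simp add: power2_eq_square algebra_simps)
  moreover have "w \<bullet> w * (a * a) \<le> c * c * (a * a)"
    using ww by (intro mult_right_mono) auto
  ultimately have "w \<bullet> w = 0" using inner_ge_zero[of w] by linarith
  then have w0: "w = 0" by simp
  have "a \<noteq> 0" using bb inner_ge_zero[of b] by auto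
  then have c0: "c = 0" using wb w0 by simp
  have "v $ i = 0" for i
    using c0 w0 unfolding c_def w_def by (cases i) (auto simp: vec_eq_iff)
  then show ?thesis by (simp add: vec_eq_iff)
qed

section \<open>Projections and determinants on subspaces\<close>

lemma proj_along_eqI:
  assumes "v \<in> A" "x - v \<in> B" "\<And>v'. v' \<in> A \<Longrightarrow> x - v' \<in> B \<Longrightarrow> v' = v"
  shows "proj_along A B x = v"
  unfolding proj_along_def
proof (rule the_equality)
  show "v \<in> A \<and> x - v \<in> B" using assms(1,2) by blast
qed (use assms(3) in blast)

lemma orthogonal_decomposition_unique:
  fixes V :: "'a::real_inner set"
  assumes V: "subspace V" and "p \<in> V" "q \<in> V"
    and p: "\<forall>v\<in>V. (x - p) \<bullet> v = 0" and q: "\<forall>v\<in>V. (x - q) \<bullet> v = 0"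
  shows "p = q"
proof -
  have pq: "p - q \<in> V" by (rule subspace_diff[OF V assms(2,3)])
  have "(p - q) \<bullet> (p - q) = (x - q) \<bullet> (p - q) - (x - p) \<bullet> (p - q)"
    by (simp add: inner_diff_left)
  also have "\<dots> = 0" using p q pq by simp
  finally show ?thesis by simp
qed

lemma proj_along_orthogonal_eqI:
  fixes V :: "'a::real_inner set"
  assumes V: "subspace V" and "p \<in> V" "\<forall>v\<in>V. (x - p) \<bullet> v = 0"
  shows "proj_along V {y. \<forall>v\<in>V. y \<bullet> v = 0} x = p"
  using assms orthogonal_decomposition_unique[OF V] by (intro proj_along_eqI) blast+

lemma orthogonal_proj_along:
  fixes V :: "'a::euclidean_space set"
  assumes V: "subspace V"
  defines "P \<equiv> proj_along V {y. \<forall>v\<in>V. y \<bullet> v = 0}"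
  shows "P x \<in> V" and "\<forall>v\<in>V. (x - P x) \<bullet> v = 0"
proof -
  obtain p z where "p \<in> span V" "\<And>w. w \<in> span V \<Longrightarrow> orthogonal z w" "x = p + z"
    using orthogonal_subspace_decomp_exists by blast
  then have p: "p \<in> V" "\<forall>v\<in>V. (x - p) \<bullet> v = 0"
    using V span_superset[of V] by (auto simp: orthogonal_def span_eq_iff[of V, THEN iffD2, OF V])
  show "P x \<in> V" "\<forall>v\<in>V. (x - P x) \<bullet> v = 0"
    unfolding P_def proj_along_orthogonal_eqI[OF V p] using p by auto
qed

lemma linear_orthogonal_proj_along:
  fixes V :: "'a::euclidean_space set"
  assumes V: "subspace V"
  shows "linear (proj_along V {y. \<forall>v\<in>V. y \<bullet> v = 0})" (is "linear ?P")
proof (rule linearI)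
  note P = orthogonal_proj_along[OF V]
  fix x y :: 'a and c :: real
  have "?P x + ?P y \<in> V" using P subspace_add[OF V] by blast
  moreover have "\<forall>v\<in>V. (x + y - (?P x + ?P y)) \<bullet> v = 0"
    using P(2)[of x] P(2)[of y] by (simp add: algebra_simps inner_add_left)
  ultimately show "?P (x + y) = ?P x + ?P y" by (rule proj_along_orthogonal_eqI[OF V])
  have "c *\<^sub>R ?P x \<in> V" using P subspace_scale[OF V] by blast
  moreover have "\<forall>v\<in>V. (c *\<^sub>R x - c *\<^sub>R ?P x) \<bullet> v = 0"
    using P(2)[of x] by (simp flip: scaleR_diff_right)
  ultimately show "?P (c *\<^sub>R x) = c *\<^sub>R ?P x" by (rule proj_along_orthogonal_eqI[OF V])
qed

lemma det_on_eq_0_iff: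
  fixes V :: "(real^'m::finite) set" and F f :: "real^'m \<Rightarrow> real^'m"
  assumes V: "subspace V" and F: "linear F" and FV: "\<And>x. x \<in> V \<Longrightarrow> F x \<in> V"
    and fF: "\<And>x. x \<in> V \<Longrightarrow> f x = F x"
  shows "det_on V f = 0 \<longleftrightarrow> (\<exists>x\<in>V. x \<noteq> 0 \<and> F x = 0)"
proof -
  define P where "P = proj_along V {y. \<forall>v\<in>V. y \<bullet> v = 0}"
  note P = orthogonal_proj_along[OF V, folded P_def]
  have P_id: "P x = x" if "x \<in> V" for x
    unfolding P_def using V that by (intro proj_along_orthogonal_eqI) auto
  define h where "h x = F (P x) + (x - P x)" for x
  have linP: "linear P" unfolding P_def by (rule linear_orthogonal_proj_along[OF V])
  have "linear (\<lambda>x. F (P x))" using linear_compose[OF linP F] by (simp add: o_def)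
  then have "linear h"
    unfolding h_def by (intro linear_compose_add linear_compose_sub[OF linear_ident linP])
  have "det_on V f = det (matrix h)"
  proof -
    have "(\<lambda>x. f (P x) + (x - P x)) = h" unfolding h_def using fF P(1) by auto
    then show ?thesis unfolding det_on_def Let_def P_def[symmetric] by simp
  qed
  moreover have "(\<exists>x. x \<noteq> 0 \<and> h x = 0) \<longleftrightarrow> (\<exists>x\<in>V. x \<noteq> 0 \<and> F x = 0)"
  proof
    assume "\<exists>x. x \<noteq> 0 \<and> h x = 0"
    then obtain x where x: "x \<noteq> 0" "h x = 0" by blast
    then have "x - P x = - F (P x)" unfolding h_def by (simp add: algebra_simps)
    moreover have "F (P x) \<in> V" using FV P by blast
    ultimately have "(x - P x) \<bullet> (x - P x) = 0" using P(2)[of x] by (simp add: inner_minus_right)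
    then have "x = P x" by simp
    then show "\<exists>x\<in>V. x \<noteq> 0 \<and> F x = 0" using x P(1)[of x] unfolding h_def by auto
  next
    assume "\<exists>x\<in>V. x \<noteq> 0 \<and> F x = 0"
    then show "\<exists>x. x \<noteq> 0 \<and> h x = 0" unfolding h_def using P_id by auto
  qed
  ultimately show ?thesis
    using det_nz_iff_inj[OF \<open>linear h\<close>] linear_injective_0[OF \<open>linear h\<close>] by auto
qed

lemma linear_eq_sum_axis:
  fixes c :: "real^'s::finite"
  assumes "linear L"
  shows "L c = (\<Sum>j\<in>UNIV. c $ j *\<^sub>R L (axis j 1))"
proof -
  have "L c = L (\<Sum>j\<in>UNIV. c $ j *\<^sub>R axis j 1)"
    using basis_expansion[of c] unfolding scalar_mult_eq_scaleR by simp
  also have "\<dots> = (\<Sum>j\<in>UNIV. c $ j *\<^sub>R L (axis j 1))"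
    by (simp add: linear_sum[OF assms] linear_scale[OF assms])
  finally show ?thesis .
qed

lemma continuous_det:
  fixes A :: "'a::t2_space \<Rightarrow> real^'m::finite^'m"
  assumes "\<And>i j. continuous F (\<lambda>t. A t $ i $ j)"
  shows "continuous F (\<lambda>t. det (A t))"
  unfolding det_def by (intro continuous_intros assms)

section \<open>Derivatives along curves\<close>

lemma smooth_on_iter_dd_differentiable:
  assumes "smooth_on S f" "open S" "x \<in> S"
  shows "iter_dd vs f differentiable (at x)"
  using assms unfolding smooth_on_def by (meson differentiable_on_eq_differentiable_at)

lemma has_derivative_eq_0_if_locally_0:
  assumes h: "(h has_derivative h') (at x)" and "e > 0" and "\<And>y. y \<in> ball x e \<Longrightarrow> h y = 0"
  shows "h' = (\<lambda>_. 0)"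
proof -
  have "((\<lambda>_. 0) has_derivative h') (at x)"
    by (rule has_derivative_transform_within_open[OF h, of "ball x e"]) (use assms in auto)
  then show ?thesis using has_derivative_const has_derivative_unique by blast
qed

lemma has_vector_derivative_compose_derivative:
  assumes "(u has_vector_derivative w) (at t)" "(f has_derivative f') (at (u t))"
  shows "((\<lambda>s. f (u s)) has_vector_derivative f' w) (at t)"
proof -
  have "((\<lambda>s. f (u s)) has_derivative (\<lambda>s. f' (s *\<^sub>R w))) (at t)"
    using has_derivative_compose[OF assms(1)[unfolded has_vector_derivative_def] assms(2)] .
  moreover have "linear f'" using assms(2) has_derivative_linear by blast
  ultimately show ?thesis unfolding has_vector_derivative_def by (simp add: linear_scale)
qed

lemma has_vector_derivative_line: "((\<lambda>t. a + t *\<^sub>R w) has_vector_derivative w) (at t)"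
  unfolding has_vector_derivative_def by (auto intro!: derivative_eq_intros)

lemma isCont_along_line:
  fixes a w :: "'a::real_normed_vector"
  assumes "isCont g a"
  shows "isCont (\<lambda>t. g (a + t *\<^sub>R w)) (0::real)"
proof -
  have "isCont (\<lambda>t. a + t *\<^sub>R w) (0::real)"
    by (rule has_vector_derivative_continuous[OF has_vector_derivative_line])
  moreover have "isCont g (a + (0::real) *\<^sub>R w)" using assms by simp
  ultimately show ?thesis by (rule isCont_o2)
qed

lemma isCont_at_0_obtains_interval:
  fixes f :: "real \<Rightarrow> 'a::topological_space"
  assumes "isCont f 0" "open S" "f 0 \<in> S"
  obtains e where "e > 0" "\<And>t. \<bar>t\<bar> < e \<Longrightarrow> f t \<in> S"
proof -
  have "(f \<longlongrightarrow> f 0) (nhds 0)"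
    using assms(1) by (simp add: isCont_def tendsto_at_iff_tendsto_nhds)
  then have "\<forall>\<^sub>F t in nhds 0. f t \<in> S" using assms(2,3) by (rule topological_tendstoD)
  then show ?thesis using that unfolding eventually_nhds_metric dist_real_def by auto
qed

lemma has_vector_derivative_scaleR_at_0:
  fixes q :: "real \<Rightarrow> 'a::real_normed_vector"
  assumes "isCont q 0"
  shows "((\<lambda>t. t *\<^sub>R q t) has_vector_derivative q 0) (at 0)"
  unfolding has_vector_derivative_def has_derivative_iff_norm
proof
  show "bounded_linear (\<lambda>s. s *\<^sub>R q 0)" by (rule bounded_linear_scaleR_left)
  have "(q \<longlongrightarrow> q 0) (at 0)" using assms by (simp add: isCont_def)
  then have "((\<lambda>y. q y - q 0) \<longlongrightarrow> 0) (at 0)" by (rule LIM_zero)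
  then have "((\<lambda>y. norm (q y - q 0)) \<longlongrightarrow> 0) (at 0)" by (rule tendsto_norm_zero)
  moreover have ev: "\<forall>\<^sub>F y in at 0. norm (q y - q 0) =
      norm (y *\<^sub>R q y - 0 *\<^sub>R q 0 - (y - 0) *\<^sub>R q 0) / norm (y - 0)"
    unfolding eventually_at_filter
  proof (rule always_eventually, intro allI impI)
    fix y :: real assume "y \<noteq> 0"
    have "y *\<^sub>R q y - 0 *\<^sub>R q 0 - (y - 0) *\<^sub>R q 0 = y *\<^sub>R (q y - q 0)"
      by (simp add: algebra_simps)
    then show "norm (q y - q 0) = norm (y *\<^sub>R q y - 0 *\<^sub>R q 0 - (y - 0) *\<^sub>R q 0) / norm (y - 0)"
      using \<open>y \<noteq> 0\<close> by simp
  qed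
  ultimately show "((\<lambda>y. norm (y *\<^sub>R q y - 0 *\<^sub>R q 0 - (y - 0) *\<^sub>R q 0) / norm (y - 0)) \<longlongrightarrow> 0) (at 0)"
    using tendsto_cong[OF ev] by blast
qed

lemma has_vector_derivative_unit_normalize:
  fixes \<zeta> :: "real \<Rightarrow> 'n::finite mink"
  assumes \<zeta>: "(\<zeta> has_vector_derivative \<zeta>') (at 0)" and unit: "lor (\<zeta> 0) (\<zeta> 0) = 1"
  obtains d where "((\<lambda>t. unit_normalize (\<zeta> t)) has_vector_derivative \<zeta>' + d *\<^sub>R \<zeta> 0) (at 0)"
proof -
  define r where "r t = lor (\<zeta> t) (\<zeta> t)" for t
  have "(r has_vector_derivative (lor (\<zeta> 0) \<zeta>' + lor \<zeta>' (\<zeta> 0))) (at 0)"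
    unfolding r_def[abs_def] by (rule bounded_bilinear.has_vector_derivative[OF bounded_bilinear_lor \<zeta> \<zeta>])
  then obtain dr where "(r has_field_derivative dr) (at 0)"
    unfolding has_real_derivative_iff_has_vector_derivative by blast
  have r0: "r 0 = 1" using unit unfolding r_def .
  have "(sqrt has_field_derivative inverse (sqrt (r 0)) / 2) (at (r 0))"
    by (rule DERIV_real_sqrt) (simp add: r0)
  from DERIV_chain2[OF this \<open>(r has_field_derivative dr) (at 0)\<close>]
  have "((\<lambda>t. inverse (sqrt (r t))) has_field_derivative
      - (inverse (sqrt (r 0)) / 2 * dr * inverse (sqrt (r 0) ^ Suc (Suc 0)))) (at 0)"
    by (rule DERIV_inverse_fun) (simp add: r0)
  from has_vector_derivative_scaleR[OF this \<zeta>]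
  show ?thesis using r0 by (intro that[where d = "- (dr / 2)"]) (simp add: r_def unit_normalize_def)
qed

section \<open>The tangential projection of a spacelike chart\<close>

lemma subspace_normsp: "subspace (normsp X u)"
  unfolding normsp_def using subspace_lor_orthogonal by blast

lemma unit_normalize_in_N1fib:
  assumes "\<zeta> \<in> normsp X u" "lor \<zeta> (nT u) = 0" "lor \<zeta> \<zeta> > 0"
  shows "unit_normalize \<zeta> \<in> N1fib X nT u"
proof -
  have "sqrt (lor \<zeta> \<zeta>) * sqrt (lor \<zeta> \<zeta>) = lor \<zeta> \<zeta>" using assms(3) by simp
  then have "lor (inverse (sqrt (lor \<zeta> \<zeta>)) *\<^sub>R \<zeta>) (inverse (sqrt (lor \<zeta> \<zeta>)) *\<^sub>R \<zeta>) = 1"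
    using assms(3) by (simp add: lor_simps field_simps)
  then show ?thesis
    using assms subspace_scale[OF subspace_normsp] by (simp add: N1fib_def unit_normalize_def lor_simps)
qed

locale spacelike_chart =
  fixes U :: "(real ^ 's::finite) set"
    and X :: "real ^ 's \<Rightarrow> real ^ ('n::finite option)"
  assumes spacelike_embedding: "spacelike_embedding U X"
begin

definition "dX u = frechet_derivative X (at u)"
definition "X_partial u i = dX u (axis i 1)"
definition "gram u = (\<chi> i j. lor (X_partial u i) (X_partial u j))"

text \<open>Cramer's rule for the Gram system, written out so that the tangential projection is
  visibly continuous in \<open>u\<close>.\<close>
definition "gram_rhs u y = (\<chi> i. lor y (X_partial u i))"
definition "tang_coeffs u y =
  (\<chi> k. det (\<chi> i j. if j = k then gram_rhs u y $ i else gram u $ i $ j) / det (gram u))"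
definition "tang_proj u y = (\<Sum>k\<in>UNIV. tang_coeffs u y $ k *\<^sub>R X_partial u k)"

lemma open_U: "open U" and smooth_X: "smooth_on U X"
  and inj_dX: "\<And>u. u \<in> U \<Longrightarrow> inj (dX u)"
  and tang_spacelike: "\<And>u v. u \<in> U \<Longrightarrow> v \<in> tang X u \<Longrightarrow> v \<noteq> 0 \<Longrightarrow> lor v v > 0"
  using spacelike_embedding unfolding spacelike_embedding_def dX_def by auto

lemma X_has_derivative: "u \<in> U \<Longrightarrow> (X has_derivative dX u) (at u)"
  using smooth_on_iter_dd_differentiable[OF smooth_X open_U, of u "[]"]
  unfolding dX_def by (simp add: frechet_derivative_works)

lemma linear_dX: "u \<in> U \<Longrightarrow> linear (dX u)"
  using X_has_derivative has_derivative_linear by blast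

lemma tang_eq_range: "tang X u = range (dX u)"
  unfolding tang_def dX_def ..

lemma subspace_tang: "u \<in> U \<Longrightarrow> subspace (tang X u)"
  unfolding tang_eq_range by (rule linear_subspace_image[OF linear_dX subspace_UNIV])

lemma dX_eq_sum: "u \<in> U \<Longrightarrow> dX u c = (\<Sum>j\<in>UNIV. c $ j *\<^sub>R X_partial u j)"
  unfolding X_partial_def by (rule linear_eq_sum_axis[OF linear_dX])

lemma normsp_iff:
  assumes u: "u \<in> U" shows "y \<in> normsp X u \<longleftrightarrow> (\<forall>i. lor y (X_partial u i) = 0)"
proof
  show "y \<in> normsp X u \<Longrightarrow> \<forall>i. lor y (X_partial u i) = 0"
    unfolding normsp_def tang_eq_range X_partial_def by auto
  show "\<forall>i. lor y (X_partial u i) = 0 \<Longrightarrow> y \<in> normsp X u"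
    unfolding normsp_def tang_eq_range by (auto simp: dX_eq_sum[OF u] lor_simps)
qed

lemma tang_inter_normsp: "u \<in> U \<Longrightarrow> a \<in> tang X u \<Longrightarrow> a \<in> normsp X u \<Longrightarrow> a = 0"
  using tang_spacelike unfolding normsp_def by fastforce

lemma gram_mult: "u \<in> U \<Longrightarrow> gram u *v c = (\<chi> i. lor (X_partial u i) (dX u c))"
  by (simp add: vec_eq_iff matrix_vector_mult_def gram_def dX_eq_sum lor_simps mult.commute)

lemma det_gram_nonzero: assumes u: "u \<in> U" shows "det (gram u) \<noteq> 0"
proof -
  have "c = 0" if "gram u *v c = 0" for c
  proof -
    have "\<forall>i. lor (X_partial u i) (dX u c) = 0"
      using that by (simp add: gram_mult[OF u] vec_eq_iff)
    then have "lor (dX u c) (dX u c) = 0"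
      by (subst (1) dX_eq_sum[OF u]) (simp add: lor_simps)
    then have "dX u c = 0"
      using tang_spacelike[OF u, of "dX u c"] by (auto simp: tang_eq_range)
    then show "c = 0"
      using inj_dX[OF u] linear_dX[OF u] by (simp add: linear_injective_0)
  qed
  then have "inj ((*v) (gram u))"
    by (simp add: linear_injective_0[OF matrix_vector_mul_linear])
  then show ?thesis
    using det_nz_iff_inj[OF matrix_vector_mul_linear, of "gram u"] by simp
qed

lemma tang_proj_eq: "u \<in> U \<Longrightarrow> tang_proj u y = dX u (tang_coeffs u y)"
  unfolding tang_proj_def by (simp add: dX_eq_sum)

lemma tang_proj_in_tang: "u \<in> U \<Longrightarrow> tang_proj u y \<in> tang X u"
  by (simp add: tang_proj_eq tang_eq_range)

lemma tang_proj_normal: assumes u: "u \<in> U" shows "y - tang_proj u y \<in> normsp X u"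
proof -
  have "gram u *v tang_coeffs u y = gram_rhs u y"
    using cramer[OF det_gram_nonzero[OF u]] unfolding tang_coeffs_def by blast
  then have "\<forall>i. lor (X_partial u i) (tang_proj u y) = lor y (X_partial u i)"
    by (simp add: gram_mult[OF u] tang_proj_eq[OF u] gram_rhs_def vec_eq_iff)
  then show ?thesis
    by (simp add: normsp_iff[OF u] lor_diff_left lor_commute[of "tang_proj u y"])
qed

lemma isCont_X_partial: "u \<in> U \<Longrightarrow> isCont (\<lambda>v. X_partial v i) u"
  using smooth_on_iter_dd_differentiable[OF smooth_X open_U, of u "[axis i 1]"]
  unfolding X_partial_def dX_def by (simp add: differentiable_imp_continuous_within)

lemma isCont_tang_proj: assumes u: "u \<in> U" shows "isCont (\<lambda>v. tang_proj v y) u"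
proof -
  have "isCont (\<lambda>v. det (gram v)) u"
    unfolding gram_def by (intro continuous_det) (simp add: isCont_X_partial[OF u] continuous_intros)
  moreover have "isCont (\<lambda>v. det (\<chi> i j. if j = k then gram_rhs v y $ i else gram v $ i $ j)) u"
    for k
  proof (intro continuous_det)
    show "isCont (\<lambda>v. (\<chi> i j. if j = k then gram_rhs v y $ i else gram v $ i $ j) $ i $ j) u" for i j
      by (cases "j = k") (simp_all add: gram_rhs_def gram_def isCont_X_partial[OF u] continuous_intros)
  qed
  ultimately have coeffs: "isCont (\<lambda>v. tang_coeffs v y $ k) u" for k
    unfolding tang_coeffs_def using det_gram_nonzero[OF u] by (simp add: continuous_intros)
  show ?thesis
    unfolding tang_proj_def by (intro continuous_sum continuous_scaleR coeffs isCont_X_partial[OF u])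
qed

end

section \<open>The splitting at \<open>p0\<close>\<close>

locale lightcone_setting = spacelike_chart U X
  for U :: "(real ^ 's::finite) set" and X :: "real ^ 's \<Rightarrow> real ^ ('n::finite option)" +
  fixes nT nS :: "real ^ 's \<Rightarrow> real ^ ('n option)"
    and W :: "(real ^ 's) set"
    and u0 :: "real ^ 's"
    and \<xi>0 :: "real ^ ('n option)"
  assumes future_normal: "future_unit_timelike_normal U X nT"
    and u0_in_U: "u0 \<in> U"
    and \<xi>0_in_fibre: "\<xi>0 \<in> N1fib X nT u0"
    and local_section: "local_section U X nT W nS"
    and u0_in_W: "u0 \<in> W"
    and nS_u0: "nS u0 = \<xi>0"
begin

lemma smooth_nT: "smooth_on U nT"
  and nT_normal: "\<And>u. u \<in> U \<Longrightarrow> nT u \<in> normsp X u"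
  and lor_nT_nT: "\<And>u. u \<in> U \<Longrightarrow> lor (nT u) (nT u) = -1"
  using future_normal unfolding future_unit_timelike_normal_def by auto

lemma open_W: "open W" and W_subset_U: "W \<subseteq> U" and smooth_nS: "smooth_on W nS"
  and nS_in_fibre: "\<And>u. u \<in> W \<Longrightarrow> nS u \<in> N1fib X nT u"
  using local_section unfolding local_section_def by auto

definition "T0 = tang X u0"
definition "N0 = normsp X u0"
definition "n0 = nT u0"
definition "E0 = {\<eta>. \<eta> \<in> N0 \<and> lor \<eta> \<xi>0 = 0 \<and> lor \<eta> n0 = 0}"
definition "V0 = {a + \<eta> | a \<eta>. a \<in> T0 \<and> \<eta> \<in> E0}"
definition "pT y = tang_proj u0 y"

text \<open>The projection onto \<open>E0\<close> along \<open>T0 \<oplus> span {n0, \<xi>0}\<close>: remove the tangential part,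
  then the components along the pseudo-orthonormal pair \<open>n0\<close>, \<open>\<xi>0\<close> (recall \<open>lor n0 n0 = -1\<close>).\<close>
definition "pE y = (y - pT y) + lor (y - pT y) n0 *\<^sub>R n0 - lor (y - pT y) \<xi>0 *\<^sub>R \<xi>0"

lemma \<xi>0_in_N0: "\<xi>0 \<in> N0" and lor_\<xi>0_\<xi>0: "lor \<xi>0 \<xi>0 = 1" and lor_\<xi>0_n0: "lor \<xi>0 n0 = 0"
  using \<xi>0_in_fibre unfolding N1fib_def N0_def n0_def by auto

lemma n0_in_N0: "n0 \<in> N0" and lor_n0_n0: "lor n0 n0 = -1"
  using nT_normal[OF u0_in_U] lor_nT_nT[OF u0_in_U] unfolding N0_def n0_def by auto

lemma subspace_T0: "subspace T0"
  unfolding T0_def by (rule subspace_tang[OF u0_in_U])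

lemma subspace_N0: "subspace N0"
  unfolding N0_def by (rule subspace_normsp)

lemma subspace_E0: "subspace E0"
  unfolding E0_def subspace_def using subspace_N0
  by (auto simp: lor_simps subspace_0 subspace_add subspace_scale)

lemma subspace_V0: "subspace V0"
  unfolding V0_def using subspace_sums[OF subspace_T0 subspace_E0] .

lemma E0_subset_N0: "\<eta> \<in> E0 \<Longrightarrow> \<eta> \<in> N0"
  unfolding E0_def by auto

lemma T0_inter_N0: "a \<in> T0 \<Longrightarrow> a \<in> N0 \<Longrightarrow> a = 0"
  using tang_inter_normsp[OF u0_in_U] unfolding T0_def N0_def by blast

lemma lor_N0_T0: "a \<in> T0 \<Longrightarrow> m \<in> N0 \<Longrightarrow> lor m a = 0"
  unfolding T0_def N0_def normsp_def by auto

lemma E0_spacelike: "\<eta> \<in> E0 \<Longrightarrow> lor \<eta> \<eta> \<le> 0 \<Longrightarrow> \<eta> = 0"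
  using eq_0_if_lor_orthogonal_unit_timelike[OF lor_n0_n0] unfolding E0_def by blast

lemma pT_in_T0: "pT y \<in> T0" and diff_pT_in_N0: "y - pT y \<in> N0"
  unfolding pT_def T0_def N0_def
  using tang_proj_in_tang[OF u0_in_U] tang_proj_normal[OF u0_in_U] by auto

lemma pT_unique: assumes "a \<in> T0" "y - a \<in> N0" shows "pT y = a"
proof -
  have "pT y - a \<in> T0"
    using assms pT_in_T0 subspace_T0 by (simp add: subspace_diff)
  moreover have "pT y - a = (y - a) - (y - pT y)" by simp
  then have "pT y - a \<in> N0"
    using assms diff_pT_in_N0 subspace_N0 by (metis subspace_diff)
  ultimately show ?thesis using T0_inter_N0 by fastforce
qed

lemma linear_pT: "linear pT"
proof (rule linearI)
  fix x y
  have "(x + y) - (pT x + pT y) = (x - pT x) + (y - pT y)" by simp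
  also have "\<dots> \<in> N0" by (rule subspace_add[OF subspace_N0 diff_pT_in_N0 diff_pT_in_N0])
  finally show "pT (x + y) = pT x + pT y"
    by (rule pT_unique[OF subspace_add[OF subspace_T0 pT_in_T0 pT_in_T0]])
next
  fix c :: real and x
  have "c *\<^sub>R x - c *\<^sub>R pT x = c *\<^sub>R (x - pT x)" by (simp add: scaleR_diff_right)
  also have "\<dots> \<in> N0" by (rule subspace_scale[OF subspace_N0 diff_pT_in_N0])
  finally show "pT (c *\<^sub>R x) = c *\<^sub>R pT x"
    by (rule pT_unique[OF subspace_scale[OF subspace_T0 pT_in_T0]])
qed

lemma pT_T0: "a \<in> T0 \<Longrightarrow> pT a = a"
  using pT_unique subspace_N0 by (simp add: subspace_0)

lemma pT_N0: "m \<in> N0 \<Longrightarrow> pT m = 0"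
  using pT_unique subspace_T0 by (simp add: subspace_0)

lemma linear_pE: "linear pE"
proof (rule linearI)
  show "pE (x + y) = pE x + pE y" for x y
    unfolding pE_def
    by (simp add: linear_add[OF linear_pT] lor_simps scaleR_add_left algebra_simps)
  show "pE (c *\<^sub>R x) = c *\<^sub>R pE x" for c x
    unfolding pE_def
    by (simp add: linear_scale[OF linear_pT] lor_simps scaleR_diff_right scaleR_add_right algebra_simps)
qed

lemma pE_in_E0: "pE y \<in> E0"
proof -
  define m where "m = y - pT y"
  have "m \<in> N0" using diff_pT_in_N0 m_def by simp
  then have "m + lor m n0 *\<^sub>R n0 - lor m \<xi>0 *\<^sub>R \<xi>0 \<in> N0"
    using n0_in_N0 \<xi>0_in_N0 subspace_N0 by (intro subspace_diff subspace_add subspace_scale) auto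
  moreover have "lor (m + lor m n0 *\<^sub>R n0 - lor m \<xi>0 *\<^sub>R \<xi>0) \<xi>0 = 0"
    using lor_\<xi>0_\<xi>0 lor_\<xi>0_n0 by (simp add: lor_simps lor_commute[of n0 \<xi>0])
  moreover have "lor (m + lor m n0 *\<^sub>R n0 - lor m \<xi>0 *\<^sub>R \<xi>0) n0 = 0"
    using lor_\<xi>0_n0 lor_n0_n0 by (simp add: lor_simps)
  ultimately show ?thesis unfolding E0_def pE_def m_def by simp
qed

lemma pE_E0: "\<eta> \<in> E0 \<Longrightarrow> pE \<eta> = \<eta>"
  using pT_N0[OF E0_subset_N0] unfolding pE_def E0_def by simp

lemma pE_T0: "a \<in> T0 \<Longrightarrow> pE a = 0"
  using pT_T0 unfolding pE_def by simp

lemma pE_n0: "pE n0 = 0" and pE_\<xi>0: "pE \<xi>0 = 0"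
  using pT_N0[OF n0_in_N0] pT_N0[OF \<xi>0_in_N0] lor_n0_n0 lor_\<xi>0_\<xi>0 lor_\<xi>0_n0
  unfolding pE_def by (simp_all add: lor_commute[of n0 \<xi>0])

lemma pT_pE: "pT (pE y) = 0" by (rule pT_N0[OF E0_subset_N0[OF pE_in_E0]])
lemma pE_pE: "pE (pE y) = pE y" by (rule pE_E0[OF pE_in_E0])

lemma V0_decomp:
  assumes "x \<in> V0"
  obtains a \<eta> where "a \<in> T0" "\<eta> \<in> E0" "x = a + \<eta>" "pT x = a" "pE x = \<eta>"
proof -
  obtain a \<eta> where a: "a \<in> T0" "\<eta> \<in> E0" "x = a + \<eta>"
    using assms unfolding V0_def by blast
  moreover have "pT x = a"
    using a pT_T0 pT_N0[OF E0_subset_N0] linear_add[OF linear_pT] by simp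
  moreover have "pE x = \<eta>"
    using a pE_T0 pE_E0 linear_add[OF linear_pE] by simp
  ultimately show ?thesis using that by blast
qed

lemma proj_along_T0_N0: "proj_along T0 N0 y = pT y"
  by (rule proj_along_eqI[OF pT_in_T0 diff_pT_in_N0]) (rule pT_unique[symmetric])

lemma proj_along_E0: "proj_along E0 {y. \<forall>e\<in>E0. lor y e = 0} y = pE y"
proof (rule proj_along_eqI[OF pE_in_E0])
  have "lor (y - pE y) e = 0" if e: "e \<in> E0" for e
  proof -
    have "y - pE y = pT y - lor (y - pT y) n0 *\<^sub>R n0 + lor (y - pT y) \<xi>0 *\<^sub>R \<xi>0"
      unfolding pE_def by (simp add: algebra_simps)
    moreover have "lor e (pT y) = 0" using lor_N0_T0[OF pT_in_T0 E0_subset_N0[OF e]] .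
    moreover have "lor e n0 = 0" "lor e \<xi>0 = 0" using e unfolding E0_def by auto
    ultimately show ?thesis
      by (simp add: lor_simps lor_commute[of "pT y" e] lor_commute[of n0 e] lor_commute[of \<xi>0 e])
  qed
  then show orth: "y - pE y \<in> {y. \<forall>e\<in>E0. lor y e = 0}" by simp
  fix v assume v: "v \<in> E0" "y - v \<in> {y. \<forall>e\<in>E0. lor y e = 0}"
  have d: "v - pE y \<in> E0" using v pE_in_E0 subspace_E0 by (simp add: subspace_diff)
  have "lor (v - pE y) (v - pE y) = lor (y - pE y) (v - pE y) - lor (y - v) (v - pE y)"
    by (simp add: lor_simps)
  also have "\<dots> = 0" using v(2) orth d by simp
  finally show "v = pE y" using E0_spacelike[OF d] by simp
qed

lemma span_n0_\<xi>0_subset_N0: "span {n0, \<xi>0} \<subseteq> N0"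
  using n0_in_N0 \<xi>0_in_N0 by (intro span_minimal[OF _ subspace_N0]) simp

lemma lor_E0_span_n0_\<xi>0: assumes "\<eta> \<in> E0" "z \<in> span {n0, \<xi>0}" shows "lor \<eta> z = 0"
proof -
  have "subspace {z. lor \<eta> z = 0}" unfolding subspace_def by (simp add: lor_simps)
  moreover have "{n0, \<xi>0} \<subseteq> {z. lor \<eta> z = 0}" using assms(1) unfolding E0_def by simp
  ultimately have "span {n0, \<xi>0} \<subseteq> {z. lor \<eta> z = 0}" by (rule span_minimal[rotated])
  then show ?thesis using assms(2) by blast
qed

lemma proj_along_V0: "proj_along V0 (span {n0, \<xi>0}) y = pT y + pE y"
proof (rule proj_along_eqI)
  show V: "pT y + pE y \<in> V0"
    using pT_in_T0 pE_in_E0 unfolding V0_def by auto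
  have "y - (pT y + pE y) = - lor (y - pT y) n0 *\<^sub>R n0 + lor (y - pT y) \<xi>0 *\<^sub>R \<xi>0"
    unfolding pE_def by (simp add: algebra_simps)
  also have "\<dots> \<in> span {n0, \<xi>0}"
    by (intro span_add span_scale span_base) auto
  finally show sp: "y - (pT y + pE y) \<in> span {n0, \<xi>0}" .
  fix v assume v: "v \<in> V0" "y - v \<in> span {n0, \<xi>0}"
  have "v - (pT y + pE y) \<in> V0" by (rule subspace_diff[OF subspace_V0 v(1) V])
  then obtain a \<eta> where a: "a \<in> T0" "\<eta> \<in> E0" "v - (pT y + pE y) = a + \<eta>"
    unfolding V0_def by blast
  have "(y - (pT y + pE y)) - (y - v) \<in> span {n0, \<xi>0}" by (rule span_diff[OF sp v(2)])
  then have ds: "a + \<eta> \<in> span {n0, \<xi>0}" using a(3) by (simp add: algebra_simps)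
  then have "a = (a + \<eta>) - \<eta>" "a + \<eta> \<in> N0" using span_n0_\<xi>0_subset_N0 by auto
  then have "a \<in> N0" using subspace_diff[OF subspace_N0 _ E0_subset_N0[OF a(2)]] by metis
  then have a0: "a = 0" using T0_inter_N0 a(1) by blast
  then have "lor \<eta> \<eta> = 0" using lor_E0_span_n0_\<xi>0[OF a(2)] ds by simp
  then have "\<eta> = 0" using E0_spacelike a(2) by simp
  then show "v = pT y + pE y" using a(3) a0 by simp
qed

definition "dnT = frechet_derivative nT (at u0)"
definition "dnS = frechet_derivative nS (at u0)"
definition "dX_partial j = frechet_derivative (\<lambda>u. X_partial u j) (at u0)"

lemma nT_has_derivative: "u \<in> U \<Longrightarrow> (nT has_derivative frechet_derivative nT (at u)) (at u)"
  using smooth_on_iter_dd_differentiable[OF smooth_nT open_U, of u "[]"]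
  by (simp add: frechet_derivative_works)

lemma nS_has_derivative: "(nS has_derivative dnS) (at u0)"
  using smooth_on_iter_dd_differentiable[OF smooth_nS open_W u0_in_W, of "[]"]
  unfolding dnS_def by (simp add: frechet_derivative_works)

lemma X_partial_has_derivative: "((\<lambda>u. X_partial u j) has_derivative dX_partial j) (at u0)"
  using smooth_on_iter_dd_differentiable[OF smooth_X open_U u0_in_U, of "[axis j 1]"]
  unfolding dX_partial_def by (simp add: frechet_derivative_works X_partial_def dX_def)

lemma linear_dnT: "linear dnT"
  using nT_has_derivative[OF u0_in_U] has_derivative_linear unfolding dnT_def by blast

lemma linear_dnS: "linear dnS"
  using nS_has_derivative has_derivative_linear by blast

text \<open>Differentiating \<open>lor \<xi> (X_partial u j) = 0\<close> along a curve \<open>(u, \<xi>)\<close> in the normal bundle.\<close>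
lemma normal_curve_constraint:
  fixes \<gamma> :: "real \<Rightarrow> (real^'s) \<times> 'n mink"
  assumes \<gamma>: "(\<gamma> has_vector_derivative (w, b)) (at 0)" and \<gamma>0: "\<gamma> 0 = (u0, \<xi>0)" and "e > 0"
    and normal: "\<And>t. \<bar>t\<bar> < e \<Longrightarrow> fst (\<gamma> t) \<in> U \<and> snd (\<gamma> t) \<in> normsp X (fst (\<gamma> t))"
  shows "lor b (X_partial u0 j) + lor \<xi>0 (dX_partial j w) = 0"
proof -
  have \<gamma>': "(\<gamma> has_derivative (\<lambda>s. s *\<^sub>R (w, b))) (at 0)"
    using \<gamma> unfolding has_vector_derivative_def .
  have fst: "((\<lambda>t. fst (\<gamma> t)) has_derivative (\<lambda>s. s *\<^sub>R w)) (at 0)"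
    using has_derivative_fst[OF \<gamma>'] by simp
  have snd: "((\<lambda>t. snd (\<gamma> t)) has_derivative (\<lambda>s. s *\<^sub>R b)) (at 0)"
    using has_derivative_snd[OF \<gamma>'] by simp
  have "((\<lambda>t. X_partial (fst (\<gamma> t)) j) has_derivative (\<lambda>s. dX_partial j (s *\<^sub>R w))) (at 0)"
    using has_derivative_compose[OF fst, of "\<lambda>u. X_partial u j"] X_partial_has_derivative \<gamma>0 by simp
  from bounded_bilinear.FDERIV[OF bounded_bilinear_lor snd this]
  have "(\<lambda>s. lor (snd (\<gamma> 0)) (dX_partial j (s *\<^sub>R w)) + lor (s *\<^sub>R b) (X_partial (fst (\<gamma> 0)) j)) = (\<lambda>_. 0)"
  proof (rule has_derivative_eq_0_if_locally_0[OF _ \<open>e > 0\<close>])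
    fix t :: real assume "t \<in> ball 0 e"
    then show "lor (snd (\<gamma> t)) (X_partial (fst (\<gamma> t)) j) = 0"
      using normal[of t] normsp_iff by (auto simp: dist_real_def)
  qed
  from fun_cong[OF this, of 1] show ?thesis using \<gamma>0 by (simp add: add.commute)
qed

lemma lor_dnS_constraint: "lor (dnS w) (X_partial u0 j) + lor \<xi>0 (dX_partial j w) = 0"
proof -
  obtain d where d: "d > 0" "ball u0 d \<subseteq> W"
    using open_W u0_in_W open_contains_ball by blast
  define e where "e = d / (norm w + 1)"
  have e: "e > 0" using d unfolding e_def by (simp add: add_nonneg_pos)
  have inW: "u0 + t *\<^sub>R w \<in> W" if "\<bar>t\<bar> < e" for t
  proof -
    have "\<bar>t\<bar> * norm w \<le> \<bar>t\<bar> * (norm w + 1)" by (simp add: mult_left_mono)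
    also have "\<dots> < d" using that unfolding e_def by (simp add: pos_less_divide_eq add_nonneg_pos)
    finally show ?thesis using d by (auto simp: dist_norm)
  qed
  have "((\<lambda>t. (u0 + t *\<^sub>R w, nS (u0 + t *\<^sub>R w))) has_vector_derivative (w, dnS w)) (at 0)"
    using has_vector_derivative_compose_derivative[OF has_vector_derivative_line, of nS] nS_has_derivative
    by (intro has_vector_derivative_Pair has_vector_derivative_line) auto
  then show ?thesis
    by (rule normal_curve_constraint[OF _ _ e])
      (use inW W_subset_U nS_in_fibre nS_u0 in \<open>auto simp: N1fib_def\<close>)
qed

lemma tangent_N1_pT:
  assumes "(w, b) \<in> tangent_space (N1 U X nT) (u0, \<xi>0)"
  shows "pT b = pT (dnS w)"
proof -
  obtain \<gamma> e where \<gamma>: "e > 0" "\<gamma> 0 = (u0, \<xi>0)" "\<forall>t\<in>{-e<..<e}. \<gamma> t \<in> N1 U X nT"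
    "(\<gamma> has_vector_derivative (w, b)) (at 0)"
    using assms unfolding tangent_space_def by blast
  have "fst (\<gamma> t) \<in> U \<and> snd (\<gamma> t) \<in> normsp X (fst (\<gamma> t))" if "\<bar>t\<bar> < e" for t
  proof -
    have "t \<in> {-e<..<e}" using that by auto
    then have "\<gamma> t \<in> N1 U X nT" using \<gamma>(3) by blast
    then show ?thesis unfolding N1_def N1fib_def by auto
  qed
  then have b: "lor b (X_partial u0 j) + lor \<xi>0 (dX_partial j w) = 0" for j
    by (rule normal_curve_constraint[OF \<gamma>(4,2,1)])
  have "\<forall>j. lor (b - dnS w) (X_partial u0 j) = 0"
    using b lor_dnS_constraint[of w] unfolding lor_diff_left by (metis add_right_cancel diff_self)
  then have "pT (b - dnS w) = 0"
    using normsp_iff[OF u0_in_U] pT_N0 unfolding N0_def by blast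
  then show ?thesis using linear_diff[OF linear_pT] by simp
qed

definition "normal_part u y = (y - tang_proj u y) + lor (y - tang_proj u y) (nT u) *\<^sub>R nT u"

lemma normal_part_in_normsp: "u \<in> U \<Longrightarrow> normal_part u y \<in> normsp X u"
  unfolding normal_part_def using tang_proj_normal nT_normal
  by (intro subspace_add[OF subspace_normsp] subspace_scale[OF subspace_normsp])

lemma lor_normal_part_nT: "u \<in> U \<Longrightarrow> lor (normal_part u y) (nT u) = 0"
  unfolding normal_part_def using lor_nT_nT by (simp add: lor_simps)

lemma normal_part_E0: "\<eta> \<in> E0 \<Longrightarrow> normal_part u0 \<eta> = \<eta>"
  using pT_N0[OF E0_subset_N0] unfolding normal_part_def E0_def pT_def n0_def by simp

lemma isCont_normal_part: "isCont (\<lambda>u. normal_part u y) u0"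
proof -
  have "isCont nT u0"
    using nT_has_derivative[OF u0_in_U] has_derivative_continuous by blast
  then show ?thesis
    unfolding normal_part_def by (intro continuous_intros isCont_tang_proj[OF u0_in_U])
qed

lemma unit_normalize_in_N1:
  assumes "v \<in> W" "\<zeta> = nS v + c *\<^sub>R normal_part v y" "lor \<zeta> \<zeta> > 0"
  shows "(v, unit_normalize \<zeta>) \<in> N1 U X nT"
proof -
  have v: "v \<in> U" using assms(1) W_subset_U by blast
  have "\<zeta> \<in> normsp X v" "lor \<zeta> (nT v) = 0"
    using nS_in_fibre[OF assms(1)] normal_part_in_normsp[OF v] lor_normal_part_nT[OF v]
    unfolding assms(2) N1fib_def
    by (auto intro: subspace_add[OF subspace_normsp] subspace_scale[OF subspace_normsp]
        simp: lor_simps)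
  then show ?thesis
    using unit_normalize_in_N1fib assms(3) v unfolding N1_def by simp
qed

text \<open>The witness is the curve \<open>u0 + t w\<close>, carrying the normalisation of
  \<open>nS + t \<cdot> normal_part \<eta>\<close>.\<close>
lemma tangent_N1_exists:
  assumes \<eta>: "\<eta> \<in> E0"
  obtains d where "(w, dnS w + \<eta> + d *\<^sub>R \<xi>0) \<in> tangent_space (N1 U X nT) (u0, \<xi>0)"
proof -
  define u where "u t = u0 + t *\<^sub>R w" for t :: real
  define \<zeta> where "\<zeta> t = nS (u t) + t *\<^sub>R normal_part (u t) \<eta>" for t
  define \<gamma> where "\<gamma> t = (u t, unit_normalize (\<zeta> t))" for t
  have u0: "u 0 = u0" unfolding u_def by simp
  have \<zeta>0: "\<zeta> 0 = \<xi>0" unfolding \<zeta>_def u0 nS_u0 by simp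
  have "((\<lambda>t. nS (u t)) has_vector_derivative dnS w) (at 0)"
    using has_vector_derivative_compose_derivative[OF has_vector_derivative_line, of nS] nS_has_derivative
    unfolding u_def by simp
  moreover have "((\<lambda>t. t *\<^sub>R normal_part (u t) \<eta>) has_vector_derivative normal_part (u 0) \<eta>) (at 0)"
    unfolding u_def
    by (rule has_vector_derivative_scaleR_at_0[OF isCont_along_line[OF isCont_normal_part]])
  ultimately have \<zeta>': "(\<zeta> has_vector_derivative dnS w + \<eta>) (at 0)"
    unfolding \<zeta>_def[abs_def] u0 normal_part_E0[OF \<eta>] by (rule has_vector_derivative_add)
  obtain d where "((\<lambda>t. unit_normalize (\<zeta> t)) has_vector_derivative dnS w + \<eta> + d *\<^sub>R \<xi>0) (at 0)"
    using has_vector_derivative_unit_normalize[OF \<zeta>'] lor_\<xi>0_\<xi>0 unfolding \<zeta>0 by blast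
  then have "(\<gamma> has_vector_derivative (w, dnS w + \<eta> + d *\<^sub>R \<xi>0)) (at 0)"
    unfolding \<gamma>_def u_def by (intro has_vector_derivative_Pair has_vector_derivative_line)
  moreover have "\<gamma> 0 = (u0, \<xi>0)"
    unfolding \<gamma>_def u0 \<zeta>0 unit_normalize_def lor_\<xi>0_\<xi>0 by simp
  moreover obtain e where "e > 0" and e: "\<And>t. \<bar>t\<bar> < e \<Longrightarrow> (u t, lor (\<zeta> t) (\<zeta> t)) \<in> W \<times> {0<..}"
  proof (rule isCont_at_0_obtains_interval)
    have "isCont u 0" "isCont \<zeta> 0"
      using has_vector_derivative_continuous has_vector_derivative_line \<zeta>'
      unfolding u_def by blast+
    then show "isCont (\<lambda>t. (u t, lor (\<zeta> t) (\<zeta> t))) 0"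
      by (intro continuous_intros)
    show "open (W \<times> {0::real<..})" using open_W by (intro open_Times) auto
    show "(u 0, lor (\<zeta> 0) (\<zeta> 0)) \<in> W \<times> {0<..}"
      using u0 u0_in_W \<zeta>0 lor_\<xi>0_\<xi>0 by simp
  qed (use that in blast)
  moreover have "\<gamma> t \<in> N1 U X nT" if "\<bar>t\<bar> < e" for t
    using e[OF that] unfolding \<gamma>_def by (intro unit_normalize_in_N1[OF _ \<zeta>_def]) auto
  ultimately have "(w, dnS w + \<eta> + d *\<^sub>R \<xi>0) \<in> tangent_space (N1 U X nT) (u0, \<xi>0)"
    unfolding tangent_space_def by (intro CollectI exI[of _ \<gamma>] exI[of _ e]) auto
  then show ?thesis by (rule that)
qed

definition "l0 = n0 + \<xi>0"
definition "x0 = l0 $ None"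

lemma lor_l0_l0: "lor l0 l0 = 0" and lor_l0_n0: "lor l0 n0 = -1"
  unfolding l0_def using lor_n0_n0 lor_\<xi>0_\<xi>0 lor_\<xi>0_n0
  by (simp_all add: lor_simps lor_commute[of n0 \<xi>0])

lemma x0_nonzero: "x0 \<noteq> 0"
proof
  assume x0: "x0 = 0"
  then have "lor l0 l0 = (\<Sum>i\<in>UNIV. (l0 $ Some i)\<^sup>2)"
    unfolding lor_def x0_def by (simp add: power2_eq_square)
  then have "\<forall>i. (l0 $ Some i)\<^sup>2 = 0"
    using lor_l0_l0 by (simp add: sum_nonneg_eq_0_iff)
  then have "l0 $ i = 0" for i using x0 unfolding x0_def by (cases i) auto
  then have "l0 = 0" by (simp add: vec_eq_iff)
  then show False using lor_l0_n0 by simp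
qed

lemma pT_l0: "pT l0 = 0"
  unfolding l0_def using n0_in_N0 \<xi>0_in_N0 subspace_N0 by (simp add: pT_N0 subspace_add)

lemma pE_l0: "pE l0 = 0"
  unfolding l0_def using linear_add[OF linear_pE] pE_n0 pE_\<xi>0 by simp

definition "dLG = frechet_derivative (LGt nT) (at (u0, \<xi>0))"

text \<open>Quotient rule for \<open>(nT u + \<xi>) / (nT u + \<xi>)\<^sub>0\<close>; the derivative of the denominator only
  contributes a multiple of \<open>l0 = nT u0 + \<xi>0\<close>.\<close>
lemma dLG_eq:
  obtains c where "dLG (w, b) = inverse x0 *\<^sub>R (dnT w + b) + c *\<^sub>R l0"
proof -
  define l where "l p = nT (fst p) + snd p" for p :: "(real^'s) \<times> 'n mink"
  define l' where "l' h = dnT (fst h) + snd h" for h :: "(real^'s) \<times> 'n mink"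
  have LG: "LGt nT = (\<lambda>p. inverse (l p $ None) *\<^sub>R l p)"
    unfolding LGt_def tld_def l_def by (auto simp: divide_inverse)
  have l0: "l (u0, \<xi>0) = l0" unfolding l_def l0_def n0_def by simp
  have "((\<lambda>p. nT (fst p)) has_derivative (\<lambda>h. dnT (fst h))) (at (u0, \<xi>0))"
    using has_derivative_compose[OF has_derivative_fst[OF has_derivative_ident], of nT dnT "(u0, \<xi>0)" UNIV]
      nT_has_derivative[OF u0_in_U, folded dnT_def] by simp
  then have l': "(l has_derivative l') (at (u0, \<xi>0))"
    unfolding l_def[abs_def] l'_def[abs_def]
    by (rule has_derivative_add[OF _ has_derivative_snd[OF has_derivative_ident]])
  have "((\<lambda>p. l p $ None) has_derivative (\<lambda>h. l' h $ None)) (at (u0, \<xi>0))"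
    by (rule bounded_linear.has_derivative[OF bounded_linear_vec_nth l'])
  then have "((\<lambda>p. inverse (l p $ None)) has_derivative
      (\<lambda>h. - (inverse (l (u0, \<xi>0) $ None) * (l' h $ None) * inverse (l (u0, \<xi>0) $ None))))
      (at (u0, \<xi>0))"
    by (rule Deriv.has_derivative_inverse[rotated]) (use l0 x0_nonzero x0_def in simp)
  from has_derivative_scaleR[OF this l']
  have "dLG = (\<lambda>h. inverse x0 *\<^sub>R l' h + (- (inverse x0 * (l' h $ None) * inverse x0)) *\<^sub>R l0)"
    unfolding dLG_def LG l0 x0_def[symmetric] by (rule frechet_derivative_at[symmetric])
  then show ?thesis
    by (intro that[of "- (inverse x0 * (l' (w, b) $ None) * inverse x0)"]) (simp add: l'_def)
qed

text \<open>\<open>K_l\<close> uses \<open>inv (dX u0)\<close>, which is linear only on \<open>T0\<close>; \<open>lg_op\<close> below needs a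
  globally linear left inverse.\<close>
definition "dX0_inv = (SOME L. linear L \<and> L \<circ> dX u0 = id)"

lemma linear_dX0_inv: "linear dX0_inv" and dX0_inv_dX: "dX0_inv (dX u0 w) = w"
proof -
  have "\<exists>L. linear L \<and> L \<circ> dX u0 = id"
    by (rule linear_injective_left_inverse[OF linear_dX[OF u0_in_U] inj_dX[OF u0_in_U]])
  then have "linear dX0_inv \<and> dX0_inv \<circ> dX u0 = id"
    unfolding dX0_inv_def by (rule someI_ex)
  then show "linear dX0_inv" "dX0_inv (dX u0 w) = w" by (auto simp: fun_eq_iff)
qed

lemma inv_dX_T0: "a \<in> T0 \<Longrightarrow> inv (dX u0) a = dX0_inv a"
  unfolding T0_def tang_eq_range using dX0_inv_dX inj_dX[OF u0_in_U] by (auto simp: inv_f_f)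

definition "shape_op a = - pT (dnT (dX0_inv a) + dnS (dX0_inv a))"

text \<open>\<open>-\<Pi>\<^sup>\<tau> \<circ> d LG~\<close> on \<open>V0 = T0 \<oplus> E0\<close>: block triangular, with diagonal blocks
  \<open>shape_op / x0\<close> on \<open>T0\<close> and \<open>-id / x0\<close> on \<open>E0\<close>.\<close>
definition "lg_op x = inverse x0 *\<^sub>R (shape_op (pT x) - pE (dnT (dX0_inv (pT x))) - pE x)"

lemma linear_shape_op: "linear shape_op"
proof -
  have "linear (\<lambda>a. dnT (dX0_inv a) + dnS (dX0_inv a))"
    using linear_compose[OF linear_dX0_inv linear_dnT] linear_compose[OF linear_dX0_inv linear_dnS]
    unfolding o_def by (rule linear_compose_add)
  from linear_compose[OF this linear_pT]
  show ?thesis unfolding shape_op_def o_def by (rule linear_compose_neg)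
qed

lemma shape_op_in_T0: "shape_op a \<in> T0"
  unfolding shape_op_def using pT_in_T0 subspace_T0 by (simp add: subspace_neg)

lemma linear_lg_op: "linear lg_op"
proof -
  have "linear (\<lambda>x. shape_op (pT x))"
    using linear_compose[OF linear_pT linear_shape_op] unfolding o_def .
  moreover have "linear (\<lambda>x. pE (dnT (dX0_inv (pT x))))"
    using linear_compose[OF linear_compose[OF linear_compose[OF linear_pT linear_dX0_inv] linear_dnT]
        linear_pE]
    unfolding o_def .
  ultimately show ?thesis
    unfolding lg_op_def
    by (intro linear_compose_scale_right linear_compose_sub linear_pE)
qed

lemma lg_op_in_V0: "lg_op x \<in> V0"
proof -
  have "- pE (dnT (dX0_inv (pT x))) - pE x \<in> E0"
    using pE_in_E0 subspace_E0 by (intro subspace_diff subspace_neg)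
  then have "shape_op (pT x) + (- pE (dnT (dX0_inv (pT x))) - pE x) \<in> V0"
    unfolding V0_def using shape_op_in_T0 by blast
  then have "shape_op (pT x) - pE (dnT (dX0_inv (pT x))) - pE x \<in> V0"
    by (simp add: algebra_simps)
  then show ?thesis unfolding lg_op_def by (rule subspace_scale[OF subspace_V0])
qed

lemma K_l_eq_0_iff: "K_l X nT nS u0 = 0 \<longleftrightarrow> (\<exists>a\<in>T0. a \<noteq> 0 \<and> shape_op a = 0)"
proof -
  have "frechet_derivative (\<lambda>v. nT v + nS v) (at u0) = (\<lambda>w. dnT w + dnS w)"
    using nT_has_derivative[OF u0_in_U] nS_has_derivative unfolding dnT_def
    by (intro frechet_derivative_at[symmetric] has_derivative_add)
  moreover have "proj_along T0 N0 = pT" using proj_along_T0_N0 by blast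
  ultimately have "K_l X nT nS u0 = det_on T0 (\<lambda>a. - pT (dnT (inv (dX u0) a) + dnS (inv (dX u0) a)))"
    unfolding K_l_def Let_def T0_def[symmetric] N0_def[symmetric] dX_def[symmetric] by simp
  also have "\<dots> = 0 \<longleftrightarrow> (\<exists>a\<in>T0. a \<noteq> 0 \<and> shape_op a = 0)"
    by (rule det_on_eq_0_iff[OF subspace_T0 linear_shape_op shape_op_in_T0])
      (simp add: shape_op_def inv_dX_T0)
  finally show ?thesis .
qed

definition "TN = tangent_space (N1 U X nT) (u0, \<xi>0)"

definition "tangent_embed = (\<lambda>(w, b). dX u0 w + pE b)"

lemma Kt_l_eq_det_on:
  "Kt_l U X nT u0 \<xi>0 =
    det_on V0 (\<lambda>x. - (pT (dLG (inv_into TN tangent_embed x)) + pE (dLG (inv_into TN tangent_embed x))))"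
proof -
  have "{\<eta>. \<eta> \<in> normsp X u0 \<and> lor \<eta> \<xi>0 = 0 \<and> lor \<eta> (nT u0) = 0} = E0"
    unfolding E0_def N0_def n0_def ..
  moreover have "{a + \<eta> |a \<eta>. a \<in> tang X u0 \<and> \<eta> \<in> E0} = V0"
    unfolding V0_def T0_def ..
  moreover have "proj_along E0 {y. \<forall>e\<in>E0. lor y e = 0} = pE"
    using proj_along_E0 by blast
  moreover have "proj_along V0 (span {nT u0, \<xi>0}) = (\<lambda>y. pT y + pE y)"
    using proj_along_V0 unfolding n0_def by blast
  moreover have "(\<lambda>(w, b). frechet_derivative X (at u0) w + pE b) = tangent_embed"
    unfolding tangent_embed_def dX_def ..
  ultimately show ?thesis
    unfolding Kt_l_def Let_def TN_def[symmetric] dLG_def[symmetric] by simp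
qed

lemma V0_subset_tangent_embed_TN: "x \<in> V0 \<Longrightarrow> x \<in> tangent_embed ` TN"
proof -
  assume "x \<in> V0"
  then obtain a \<eta> where a: "a \<in> T0" "\<eta> \<in> E0" "x = a + \<eta>" unfolding V0_def by blast
  obtain w where w: "a = dX u0 w" using a(1) unfolding T0_def tang_eq_range by blast
  have \<eta>': "\<eta> - pE (dnS w) \<in> E0" using a(2) pE_in_E0 subspace_E0 by (simp add: subspace_diff)
  then obtain d where d: "(w, dnS w + (\<eta> - pE (dnS w)) + d *\<^sub>R \<xi>0) \<in> TN"
    unfolding TN_def by (rule tangent_N1_exists)
  have "tangent_embed (w, dnS w + (\<eta> - pE (dnS w)) + d *\<^sub>R \<xi>0) = x"
    unfolding tangent_embed_def a(3) w using pE_E0[OF \<eta>'] pE_\<xi>0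
    by (simp add: linear_add[OF linear_pE] linear_scale[OF linear_pE])
  then show ?thesis using d by (metis image_eqI)
qed

lemma minus_proj_dLG:
  assumes "(w, b) \<in> TN"
  shows "- (pT (dLG (w, b)) + pE (dLG (w, b))) = lg_op (tangent_embed (w, b))"
proof -
  have pT_x: "pT (tangent_embed (w, b)) = dX u0 w"
    unfolding tangent_embed_def
    using pT_T0[of "dX u0 w"] pT_pE linear_add[OF linear_pT] by (simp add: T0_def tang_eq_range)
  have pE_x: "pE (tangent_embed (w, b)) = pE b"
    unfolding tangent_embed_def
    using pE_T0[of "dX u0 w"] pE_pE linear_add[OF linear_pE] by (simp add: T0_def tang_eq_range)
  have pT_b: "pT b = pT (dnS w)" using assms unfolding TN_def by (rule tangent_N1_pT)
  obtain c where c: "dLG (w, b) = inverse x0 *\<^sub>R (dnT w + b) + c *\<^sub>R l0" by (rule dLG_eq)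
  show ?thesis
    unfolding lg_op_def shape_op_def pT_x pE_x dX0_inv_dX c
    using pT_b pT_l0 pE_l0
    by (simp add: linear_add[OF linear_pT] linear_scale[OF linear_pT]
        linear_add[OF linear_pE] linear_scale[OF linear_pE] scaleR_add_right algebra_simps)
qed

lemma Kt_l_eq_0_iff: "Kt_l U X nT u0 \<xi>0 = 0 \<longleftrightarrow> (\<exists>x\<in>V0. x \<noteq> 0 \<and> lg_op x = 0)"
  unfolding Kt_l_eq_det_on
proof (rule det_on_eq_0_iff[OF subspace_V0 linear_lg_op lg_op_in_V0])
  fix x assume "x \<in> V0"
  then have x: "x \<in> tangent_embed ` TN" by (rule V0_subset_tangent_embed_TN)
  obtain w b where wb: "inv_into TN tangent_embed x = (w, b)" by fastforce
  have "(w, b) \<in> TN" using inv_into_into[OF x] wb by simp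
  moreover have "tangent_embed (w, b) = x" using f_inv_into_f[OF x] wb by simp
  ultimately show "- (pT (dLG (inv_into TN tangent_embed x)) + pE (dLG (inv_into TN tangent_embed x)))
      = lg_op x"
    unfolding wb using minus_proj_dLG by blast
qed

lemma lg_op_eq_0_iff:
  "lg_op x = 0 \<longleftrightarrow> shape_op (pT x) = 0 \<and> pE x = - pE (dnT (dX0_inv (pT x)))"
proof -
  define a where "a = shape_op (pT x)"
  define \<eta> where "\<eta> = pE x + pE (dnT (dX0_inv (pT x)))"
  have "a \<in> T0" "\<eta> \<in> N0"
    unfolding a_def \<eta>_def using shape_op_in_T0 pE_in_E0 subspace_E0
    by (auto intro: E0_subset_N0 subspace_add)
  have "lg_op x = inverse x0 *\<^sub>R (a - \<eta>)"
    unfolding lg_op_def a_def \<eta>_def by (simp add: algebra_simps)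
  then have "lg_op x = 0 \<longleftrightarrow> a = \<eta>" using x0_nonzero by simp
  also have "\<dots> \<longleftrightarrow> a = 0 \<and> \<eta> = 0"
    using T0_inter_N0 \<open>a \<in> T0\<close> \<open>\<eta> \<in> N0\<close> by blast
  finally show ?thesis unfolding a_def \<eta>_def by (simp add: eq_neg_iff_add_eq_0)
qed

lemma kernel_shape_op_iff_kernel_lg_op:
  "(\<exists>a\<in>T0. a \<noteq> 0 \<and> shape_op a = 0) \<longleftrightarrow> (\<exists>x\<in>V0. x \<noteq> 0 \<and> lg_op x = 0)"
proof
  assume "\<exists>a\<in>T0. a \<noteq> 0 \<and> shape_op a = 0"
  then obtain a where a: "a \<in> T0" "a \<noteq> 0" "shape_op a = 0" by blast
  define x where "x = a - pE (dnT (dX0_inv a))"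
  have "- pE (dnT (dX0_inv a)) \<in> E0" using pE_in_E0 subspace_E0 by (simp add: subspace_neg)
  then have "a + - pE (dnT (dX0_inv a)) \<in> V0" unfolding V0_def using a(1) by blast
  then have "x \<in> V0" unfolding x_def by simp
  moreover have "pT x = a"
    unfolding x_def using pT_T0[OF a(1)] pT_pE linear_diff[OF linear_pT] by simp
  moreover have "pE x = - pE (dnT (dX0_inv a))"
    unfolding x_def using pE_T0[OF a(1)] pE_pE linear_diff[OF linear_pE] by simp
  ultimately show "\<exists>x\<in>V0. x \<noteq> 0 \<and> lg_op x = 0"
    using a(2,3) lg_op_eq_0_iff linear_0[OF linear_pT] by metis
next
  assume "\<exists>x\<in>V0. x \<noteq> 0 \<and> lg_op x = 0"
  then obtain x where x: "x \<in> V0" "x \<noteq> 0" "lg_op x = 0" by blast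
  obtain a \<eta> where a: "a \<in> T0" "\<eta> \<in> E0" "x = a + \<eta>" "pT x = a" "pE x = \<eta>"
    using x(1) by (rule V0_decomp)
  have x_ker: "shape_op a = 0" "\<eta> = - pE (dnT (dX0_inv a))"
    using x(3) lg_op_eq_0_iff[of x] a(4,5) by simp_all
  have "a \<noteq> 0"
  proof
    assume "a = 0"
    then have "\<eta> = 0"
      using x_ker(2) linear_0[OF linear_dX0_inv] linear_0[OF linear_dnT] linear_0[OF linear_pE] by simp
    then show False using x(2) a(3) \<open>a = 0\<close> by simp
  qed
  then show "\<exists>a\<in>T0. a \<noteq> 0 \<and> shape_op a = 0" using a(1) x_ker(1) by blast
qed

lemma K_l_eq_0_iff_Kt_l_eq_0: "K_l X nT nS u0 = 0 \<longleftrightarrow> Kt_l U X nT u0 \<xi>0 = 0"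
  unfolding K_l_eq_0_iff Kt_l_eq_0_iff by (rule kernel_shape_op_iff_kernel_lg_op)

end

theorem corollary4p2:
  fixes U :: "(real ^ 's::finite) set"
    and X :: "real ^ 's \<Rightarrow> real ^ ('n::finite option)"
    and nT nS :: "real ^ 's \<Rightarrow> real ^ ('n option)"
    and W :: "(real ^ 's) set"
    and u0 :: "real ^ 's"
    and \<xi>0 :: "real ^ ('n option)"
  assumes "spacelike_embedding U X"
    and "future_unit_timelike_normal U X nT"
    and "u0 \<in> U"
    and "\<xi>0 \<in> N1fib X nT u0"
    and "local_section U X nT W nS"
    and "u0 \<in> W"
    and "nS u0 = \<xi>0"
  shows "K_l X nT nS u0 = 0 \<longleftrightarrow> Kt_l U X nT u0 \<xi>0 = 0"
proof -
  interpret lightcone_setting U X nT nS W u0 \<xi>0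
    by unfold_locales (fact assms)+
  show ?thesis by (rule K_l_eq_0_iff_Kt_l_eq_0)
qed

end
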